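(* Let $\mathcal{Y}$, $\mathcal{O}$ be finite sets, $\varphi\colon\mathcal{Y}\to\mathbb{R}^p$, $\psi\colon\mathcal{O}\to\mathbb{R}^p$, and $L(\hat y,y)=\langle\psi(\hat y),V\varphi(y)+b\rangle+c(y)$ with $V\in\mathbb{R}^{p\times p}$, $b\in\mathbb{R}^p$, $c\colon\mathcal{Y}\to\mathbb{R}$. Let $\Psi\colon\mathbb{R}^p\to\mathbb{R}\cup\{\infty\}$ be of Legendre type and $\frac1\beta$-strongly convex over $\mathcal{C}$ w.r.t. a norm $\|\cdot\|$ ($\beta>0$), where $\mathcal{C}$ is a closed convex set with $\varphi(\mathcal{Y})\subseteq\mathcal{C}\subseteq\operatorname{dom}(\Psi)$. Let $\sigma:=\max_{\hat y\in\mathcal{O}}\|V^\top\psi(\hat y)\|_*>0$. Take the surrogate $S(\theta,y)=S^\Psi_{\mathcal{C}}(\theta,y)$ and the decoder $d=\hat y_L\circ P^\Psi_{\mathcal{C}}$. Then the calibration function satisfies $$\zeta(\epsilon)\ge\frac{\epsilon^2}{8\beta\sigma^2}\qquad\text{for all }\epsilon\ge0.$$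
   Context: $\Omega=\Psi+I_{\mathcal{C}}$ with $I_{\mathcal{C}}$ the indicator of $\mathcal{C}$; $S^\Psi_{\mathcal{C}}(\theta,y)=\Omega^*(\theta)+\Omega(\varphi(y))-\langle\theta,\varphi(y)\rangle$ with $\Omega^*$ the Fenchel conjugate. $P^\Psi_{\mathcal{C}}(\theta)=\operatorname{argmin}_{u\in\mathcal{C}}D_\Psi(u,\nabla\Psi^*(\theta))$, $D_\Psi(u,v)=\Psi(u)-\Psi(v)-\langle\nabla\Psi(v),u-v\rangle$; under the hypotheses $P^\Psi_{\mathcal{C}}=\nabla\Omega^*$. Strong convexity over $\mathcal{C}$: $\Psi(tu+(1-t)v)\le t\Psi(u)+(1-t)\Psi(v)-\frac{t(1-t)}{2\beta}\|u-v\|^2$ for $u,v\in\mathcal{C}$, $t\in[0,1]$. $\|\cdot\|_*$ is the dual norm. $\hat y_L(u)\in\operatorname{argmin}_{y'\in\mathcal{O}}\langle\psi(y'),Vu+b\rangle$ (fixed tie-breaking). Pointwise risks for $q\in\triangle^{|\mathcal{Y}|}$: $\ell(\hat y,q)=\mathbb{E}_{Y\sim q}L(\hat y,Y)$, $s(\theta,q)=\mathbb{E}_{Y\sim q}S(\theta,Y)$, excesses $\delta\ell(\hat y,q)=\ell(\hat y,q)-\min_{y'\in\mathcal{O}}\ell(y',q)$, $\delta s(\theta,q)=s(\theta,q)-\inf_{\theta'}s(\theta',q)$. Calibration function: $\zeta(\epsilon)=\inf_{\theta\in\mathbb{R}^p,q\in\triangle^{|\mathcal{Y}|}}\delta s(\theta,q)$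 subject to $\delta\ell(d(\theta),q)\ge\epsilon$. *)

theory Defs
  imports "HOL-Analysis.Analysis"
begin

text \<open>Extended-real valued functions on R^p are modelled as \<open>real^'p \<Rightarrow> ereal\<close>
  (values in R \<union> {\<infinity>}).\<close>

definition edom :: "('a \<Rightarrow> ereal) \<Rightarrow> 'a set" where
  "edom f = {x. f x < \<infinity>}"

definition proper_fun :: "('a \<Rightarrow> ereal) \<Rightarrow> bool" where
  "proper_fun f \<longleftrightarrow> (\<forall>x. f x \<noteq> -\<infinity>) \<and> edom f \<noteq> {}"

definition convex_efun :: "('a::real_vector \<Rightarrow> ereal) \<Rightarrow> bool" where
  "convex_efun f \<longleftrightarrow> (\<forall>x y t. 0 \<le> t \<and> t \<le> 1 \<longrightarrow>
      f (t *\<^sub>R x + (1 - t) *\<^sub>R y) \<le> ereal t * f x + ereal (1 - t) * f y)"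

definition closed_efun :: "('a::topological_space \<Rightarrow> ereal) \<Rightarrow> bool" where
  "closed_efun f \<longleftrightarrow> closed {(x, t::real). f x \<le> ereal t}"

text \<open>Gradient of an (extended) real function at a point (meaningful where it is
  finite and differentiable).\<close>
definition egrad :: "(real^'p \<Rightarrow> ereal) \<Rightarrow> real^'p \<Rightarrow> real^'p" where
  "egrad f x = (SOME g. ((\<lambda>z. real_of_ereal (f z)) has_derivative (\<lambda>h. g \<bullet> h)) (at x))"

definition differentiable_efun_at :: "(real^'p \<Rightarrow> ereal) \<Rightarrow> real^'p \<Rightarrow> bool" where
  "differentiable_efun_at f x \<longleftrightarrow> f x \<noteq> \<infinity> \<and> f x \<noteq> -\<infinity> \<and>
     (\<exists>g. ((\<lambda>z. real_of_ereal (f z)) has_derivative (\<lambda>h. g \<bullet> h)) (at x))"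

definition essentially_smooth :: "(real^'p \<Rightarrow> ereal) \<Rightarrow> bool" where
  "essentially_smooth f \<longleftrightarrow>
     interior (edom f) \<noteq> {} \<and>
     (\<forall>x \<in> interior (edom f). differentiable_efun_at f x) \<and>
     (\<forall>X x. (\<forall>k. X k \<in> interior (edom f)) \<longrightarrow> X \<longlonglongrightarrow> x \<longrightarrow>
         x \<in> frontier (interior (edom f)) \<longrightarrow>
         filterlim (\<lambda>k. norm (egrad f (X k))) at_top sequentially)"

text \<open>Essentially strictly convex; for an essentially smooth convex function this is
  strict convexity on the interior of its domain (= dom of the subdifferential).\<close>
definition strictly_convex_on_int_dom :: "(real^'p \<Rightarrow> ereal) \<Rightarrow> bool" where
  "strictly_convex_on_int_dom f \<longleftrightarrow>
     (\<forall>x \<in> interior (edom f). \<forall>y \<in> interior (edom f). \<forall>t. x \<noteq> y \<and> 0 < t \<and> t < 1 \<longrightarrow>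
        f (t *\<^sub>R x + (1 - t) *\<^sub>R y) < ereal t * f x + ereal (1 - t) * f y)"

definition legendre_type :: "(real^'p \<Rightarrow> ereal) \<Rightarrow> bool" where
  "legendre_type f \<longleftrightarrow> proper_fun f \<and> convex_efun f \<and> closed_efun f \<and>
     essentially_smooth f \<and> strictly_convex_on_int_dom f"

definition is_norm :: "(real^'p \<Rightarrow> real) \<Rightarrow> bool" where
  "is_norm N \<longleftrightarrow> (\<forall>x. N x = 0 \<longleftrightarrow> x = 0) \<and> (\<forall>x y. N (x + y) \<le> N x + N y) \<and>
     (\<forall>c x. N (c *\<^sub>R x) = \<bar>c\<bar> * N x)"

definition dual_norm :: "(real^'p \<Rightarrow> real) \<Rightarrow> real^'p \<Rightarrow> real" where
  "dual_norm N v = Sup {v \<bullet> u | u. N u \<le> 1}"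

definition strongly_convex_over :: "(real^'p \<Rightarrow> ereal) \<Rightarrow> (real^'p) set \<Rightarrow> (real^'p \<Rightarrow> real) \<Rightarrow> real \<Rightarrow> bool" where
  "strongly_convex_over f C N \<beta> \<longleftrightarrow> (\<forall>u\<in>C. \<forall>v\<in>C. \<forall>t. 0 \<le> t \<and> t \<le> 1 \<longrightarrow>
     f (t *\<^sub>R u + (1 - t) *\<^sub>R v) \<le> ereal t * f u + ereal (1 - t) * f v
        - ereal (t * (1 - t) / (2 * \<beta>) * (N (u - v))\<^sup>2))"

definition fenchel_conj :: "(real^'p \<Rightarrow> ereal) \<Rightarrow> real^'p \<Rightarrow> ereal" where
  "fenchel_conj f \<theta> = (SUP u. ereal (\<theta> \<bullet> u) - f u)"

definition Omega :: "(real^'p \<Rightarrow> ereal) \<Rightarrow> (real^'p) set \<Rightarrow> real^'p \<Rightarrow> ereal" where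
  "Omega \<Psi> C u = (if u \<in> C then \<Psi> u else \<infinity>)"

definition surrogate :: "(real^'p \<Rightarrow> ereal) \<Rightarrow> (real^'p) set \<Rightarrow> ('y \<Rightarrow> real^'p) \<Rightarrow> real^'p \<Rightarrow> 'y \<Rightarrow> ereal" where
  "surrogate \<Psi> C \<phi> \<theta> y = fenchel_conj (Omega \<Psi> C) \<theta> + Omega \<Psi> C (\<phi> y) - ereal (\<theta> \<bullet> \<phi> y)"

text \<open>Projection P^Psi_C, taken as grad Omega* (equal to the Bregman projection under
  the hypotheses, as stated in the context).\<close>
definition proj_PsiC :: "(real^'p \<Rightarrow> ereal) \<Rightarrow> (real^'p) set \<Rightarrow> real^'p \<Rightarrow> real^'p" where
  "proj_PsiC \<Psi> C \<theta> = egrad (fenchel_conj (Omega \<Psi> C)) \<theta>"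

definition prob_simplex :: "('y::finite \<Rightarrow> real) set" where
  "prob_simplex = {q. (\<forall>y. 0 \<le> q y) \<and> sum q UNIV = 1}"

definition ptw_loss :: "('o \<Rightarrow> 'y::finite \<Rightarrow> real) \<Rightarrow> 'o \<Rightarrow> ('y \<Rightarrow> real) \<Rightarrow> real" where
  "ptw_loss L yh q = (\<Sum>y\<in>UNIV. q y * L yh y)"

definition excess_loss :: "('o::finite \<Rightarrow> 'y::finite \<Rightarrow> real) \<Rightarrow> 'o \<Rightarrow> ('y \<Rightarrow> real) \<Rightarrow> real" where
  "excess_loss L yh q = ptw_loss L yh q - Min (range (\<lambda>y'. ptw_loss L y' q))"

definition ptw_surr :: "('t \<Rightarrow> 'y::finite \<Rightarrow> ereal) \<Rightarrow> 't \<Rightarrow> ('y \<Rightarrow> real) \<Rightarrow> ereal" where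
  "ptw_surr S \<theta> q = (\<Sum>y\<in>UNIV. ereal (q y) * S \<theta> y)"

definition excess_surr :: "('t \<Rightarrow> 'y::finite \<Rightarrow> ereal) \<Rightarrow> 't \<Rightarrow> ('y \<Rightarrow> real) \<Rightarrow> ereal" where
  "excess_surr S \<theta> q = ptw_surr S \<theta> q - (INF \<theta>'. ptw_surr S \<theta>' q)"

definition calibration_fun :: "('o::finite \<Rightarrow> 'y::finite \<Rightarrow> real) \<Rightarrow> ('t \<Rightarrow> 'y \<Rightarrow> ereal)
    \<Rightarrow> ('t \<Rightarrow> 'o) \<Rightarrow> real \<Rightarrow> ereal" where
  "calibration_fun L S d \<epsilon> =
     (INF (\<theta>, q) \<in> {(\<theta>, q). q \<in> prob_simplex \<and> excess_loss L (d \<theta>) q \<ge> \<epsilon>}. excess_surr S \<theta> q)"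

end

theory Submission
  imports Defs
begin

text \<open>\<open>\<Omega>\<^sup>*(\<theta>)\<close> is the maximum over \<open>C\<close> of the strongly concave, upper semicontinuous function
  \<open>v \<mapsto> \<langle>\<theta>, v\<rangle> - \<Psi>(v)\<close>. It is attained at a unique point \<open>P \<theta>\<close>, and the quadratic growth
  around \<open>P \<theta>\<close> makes \<open>\<Omega>\<^sup>*\<close> differentiable with gradient \<open>P \<theta>\<close> and \<open>\<beta>\<close>-smooth with respect
  to the dual norm. With \<open>\<mu>\<close> the mean of \<open>\<phi>(Y)\<close> under \<open>q\<close>, the surrogate risk is
  \<open>\<Omega>\<^sup>*(\<theta>) - \<langle>\<theta>, \<mu>\<rangle>\<close> up to a constant, and a step from \<open>\<theta>\<close> against an almost norming
  functional of \<open>P \<theta> - \<mu>\<close> lowers it by almost \<open>\<parallel>P \<theta> - \<mu>\<parallel>\<^sup>2 / (2 \<beta>)\<close>. On the other hand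
  the loss is affine in \<open>\<mu>\<close> and the decoder is exact at \<open>P \<theta>\<close>, so the excess task loss is at
  most \<open>2 \<sigma> \<parallel>P \<theta> - \<mu>\<parallel>\<close>.\<close>

lemma is_normD:
  assumes "is_norm N"
  shows is_norm_scaleR: "N (c *\<^sub>R x) = \<bar>c\<bar> * N x"
    and is_norm_triangle: "N (x + y) \<le> N x + N y"
    and is_norm_eq_0: "N x = 0 \<longleftrightarrow> x = 0"
    and is_norm_zero: "N 0 = 0"
    and is_norm_minus: "N (- x) = N x"
    and is_norm_minus_commute: "N (x - y) = N (y - x)"
    and is_norm_nonneg: "0 \<le> N x"
proof -
  show scale: "N (c *\<^sub>R x) = \<bar>c\<bar> * N x" for c x
    using assms unfolding is_norm_def by blast
  show triangle: "N (x + y) \<le> N x + N y" for x y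
    using assms unfolding is_norm_def by blast
  show "N x = 0 \<longleftrightarrow> x = 0"
    using assms unfolding is_norm_def by blast
  show zero: "N 0 = 0"
    using scale[of 0 0] by simp
  show minus: "N (- x) = N x" for x
    using scale[of "-1" x] by simp
  show "N (x - y) = N (y - x)"
    using minus[of "x - y"] by simp
  show "0 \<le> N x"
    using triangle[of x "- x"] zero minus[of x] by simp
qed

lemma is_norm_pos: "is_norm N \<Longrightarrow> x \<noteq> 0 \<Longrightarrow> 0 < N x"
  using is_norm_eq_0 is_norm_nonneg by (metis order_le_less)

lemma is_norm_convex_comb:
  assumes "is_norm N" "0 \<le> t" "t \<le> 1"
  shows "N ((1 - t) *\<^sub>R x + t *\<^sub>R y) \<le> (1 - t) * N x + t * N y"
  using is_norm_triangle[OF assms(1), of "(1 - t) *\<^sub>R x" "t *\<^sub>R y"] assms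
  by (simp add: is_norm_scaleR)

lemma is_norm_continuous_on:
  fixes N :: "real^'p \<Rightarrow> real"
  assumes "is_norm N"
  shows "continuous_on A N"
proof -
  have "convex_on UNIV N"
    using is_norm_convex_comb[OF assms] by (intro convex_onI) auto
  then show ?thesis
    using convex_on_continuous continuous_on_subset by blast
qed

lemma is_norm_lower_bound:
  fixes N :: "real^'p \<Rightarrow> real"
  assumes "is_norm N"
  obtains c where "0 < c" "\<And>x. c * norm x \<le> N x"
proof -
  have "sphere (0::real^'p) 1 \<noteq> {}"
    using vector_choose_size[of 1] by auto
  then obtain x0 where x0: "x0 \<in> sphere 0 1" "\<And>y. y \<in> sphere 0 1 \<Longrightarrow> N x0 \<le> N y"
    using continuous_attains_inf[OF compact_sphere _ is_norm_continuous_on[OF assms]] by metis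
  have "N x0 * norm x \<le> N x" for x
  proof (cases "x = 0")
    case False
    then have "N x0 \<le> N ((1 / norm x) *\<^sub>R x)"
      by (intro x0(2)) simp
    then show ?thesis
      using False by (simp add: is_norm_scaleR[OF assms] field_simps)
  qed (simp add: is_norm_zero[OF assms])
  moreover have "x0 \<noteq> 0"
    using x0(1) by auto
  then have "0 < N x0"
    using is_norm_pos[OF assms] by blast
  ultimately show ?thesis
    using that by blast
qed

lemma dual_norm_inner_le:
  fixes N :: "real^'p \<Rightarrow> real"
  assumes "is_norm N"
  shows "v \<bullet> y \<le> dual_norm N v * N y"
proof (cases "y = 0")
  case False
  obtain c where c: "0 < c" "\<And>x. c * norm x \<le> N x"
    using is_norm_lower_bound[OF assms] by blast
  have "v \<bullet> u \<le> norm v / c" if "N u \<le> 1" for u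
  proof -
    have "norm u \<le> 1 / c"
      using c that by (smt (verit) mult.commute pos_le_divide_eq)
    then show ?thesis
      using norm_cauchy_schwarz[of v u] mult_left_mono[of "norm u" "1 / c" "norm v"] by simp
  qed
  then have bdd: "bdd_above {v \<bullet> u | u. N u \<le> 1}"
    by (intro bdd_aboveI) blast
  have Ny: "0 < N y"
    using is_norm_pos[OF assms False] .
  then have "N ((1 / N y) *\<^sub>R y) \<le> 1"
    by (simp add: is_norm_scaleR[OF assms])
  then have "v \<bullet> ((1 / N y) *\<^sub>R y) \<le> dual_norm N v"
    unfolding dual_norm_def by (intro cSup_upper[OF _ bdd]) blast
  then show ?thesis
    using Ny by (simp add: field_simps)
qed (simp add: is_norm_zero[OF assms])

lemma norming_functional_approx:
  fixes N :: "real^'p \<Rightarrow> real"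
  assumes nrm: "is_norm N" and "r < 1"
  obtains h where "\<And>x. h \<bullet> x \<le> N x" "r * N d \<le> h \<bullet> d"
proof (cases "0 < r \<and> d \<noteq> 0")
  case False
  then have "r * N d \<le> 0 \<bullet> d"
    using is_norm_nonneg[OF nrm, of d] is_norm_zero[OF nrm]
    by (auto simp: mult_nonpos_nonneg)
  then show ?thesis
    using that[of 0] is_norm_nonneg[OF nrm] by simp
next
  case True
  define B where "B = {x. N x \<le> 1}"
  have "convex B"
    unfolding B_def convex_alt using is_norm_convex_comb[OF nrm]
    by (smt (verit, ccfv_SIG) mem_Collect_eq mult_left_le)
  moreover have "closed B"
    unfolding B_def by (intro closed_Collect_le is_norm_continuous_on[OF nrm]) simp
  moreover define z where "z = (1 / (r * N d)) *\<^sub>R d"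
  moreover have "N z = 1 / r"
    using True is_norm_pos[OF nrm, of d] by (simp add: z_def is_norm_scaleR[OF nrm])
  ultimately obtain a b where ab: "a \<bullet> z < b" "\<And>x. x \<in> B \<Longrightarrow> b < a \<bullet> x"
    using separating_hyperplane_closed_point[of B z] True assms(2) by (auto simp: B_def)
  have "b < 0"
    using ab(2)[of 0] by (simp add: B_def is_norm_zero[OF nrm])
  define h where "h = (1 / b) *\<^sub>R a"
  have h_B: "h \<bullet> x < 1" if "x \<in> B" for x
    using ab(2)[OF that] \<open>b < 0\<close> by (simp add: h_def divide_less_eq)
  have "h \<bullet> x \<le> N x" for x
  proof (cases "x = 0")
    case False
    then have "(1 / N x) *\<^sub>R x \<in> B"
      using is_norm_pos[OF nrm, of x] by (simp add: B_def is_norm_scaleR[OF nrm])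
    then have "h \<bullet> ((1 / N x) *\<^sub>R x) < 1"
      by (rule h_B)
    then show ?thesis
      using is_norm_pos[OF nrm False] by (simp add: divide_less_eq)
  qed (simp add: is_norm_zero[OF nrm])
  moreover have "1 < h \<bullet> z"
    using ab(1) \<open>b < 0\<close> by (simp add: h_def less_divide_eq)
  then have "r * N d < h \<bullet> d"
    using True is_norm_pos[OF nrm] by (simp add: z_def field_simps)
  ultimately show ?thesis
    using that by fastforce
qed

lemma compact_attains_sup_closed_superlevels:
  fixes f :: "'a::topological_space \<Rightarrow> real"
  assumes "compact K" "K \<noteq> {}" and closed_levels: "\<And>s. closed {v \<in> K. s \<le> f v}"
  shows "\<exists>x\<in>K. \<forall>y\<in>K. f y \<le> f x"
proof -
  have "K \<inter> (\<Inter>y\<in>K. {v \<in> K. f y \<le> f v}) \<noteq> {}"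
  proof (rule compact_imp_fip_image[OF \<open>compact K\<close> closed_levels])
    fix D assume D: "finite D" "D \<subseteq> K"
    show "K \<inter> (\<Inter>y\<in>D. {v \<in> K. f y \<le> f v}) \<noteq> {}"
    proof (cases "D = {}")
      case False
      then have "Max (f ` D) \<in> f ` D"
        using D(1) by simp
      then obtain x where x: "x \<in> D" "f x = Max (f ` D)"
        by auto
      then have "\<forall>y\<in>D. f y \<le> f x"
        using D(1) by simp
      then show ?thesis
        using x(1) D(2) by blast
    qed (use \<open>K \<noteq> {}\<close> in simp)
  qed
  then show ?thesis
    by blast
qed

lemma has_derivative_of_quadratic_sandwich:
  fixes f :: "'a::real_inner \<Rightarrow> real"
  assumes lower: "\<And>k. 0 \<le> f (x + k) - f x - a \<bullet> k"
    and upper: "\<And>k. f (x + k) - f x - a \<bullet> k \<le> B * (norm k)\<^sup>2"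
  shows "(f has_derivative (\<lambda>h. a \<bullet> h)) (at x)"
  unfolding has_derivative_at_alt
proof (intro conjI allI impI bounded_linear_inner_right)
  fix e :: real assume "0 < e"
  show "\<exists>d>0. \<forall>y. norm (y - x) < d \<longrightarrow> norm (f y - f x - a \<bullet> (y - x)) \<le> e * norm (y - x)"
  proof (intro exI[of _ "e / (\<bar>B\<bar> + 1)"] conjI allI impI)
    show "0 < e / (\<bar>B\<bar> + 1)"
      using \<open>0 < e\<close> by simp
    fix y assume "norm (y - x) < e / (\<bar>B\<bar> + 1)"
    then have "(\<bar>B\<bar> + 1) * norm (y - x) \<le> e"
      by (simp add: field_simps)
    then have "(\<bar>B\<bar> + 1) * norm (y - x) * norm (y - x) \<le> e * norm (y - x)"
      by (simp add: mult_right_mono)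
    moreover have "B * (norm (y - x))\<^sup>2 \<le> (\<bar>B\<bar> + 1) * norm (y - x) * norm (y - x)"
      using mult_right_mono[of B "\<bar>B\<bar> + 1" "norm (y - x) * norm (y - x)"]
      by (simp add: power2_eq_square mult.assoc)
    ultimately have "B * (norm (y - x))\<^sup>2 \<le> e * norm (y - x)"
      by linarith
    then show "norm (f y - f x - a \<bullet> (y - x)) \<le> e * norm (y - x)"
      using lower[of "y - x"] upper[of "y - x"] by simp
  qed
qed

definition mean_embedding :: "('y::finite \<Rightarrow> real) \<Rightarrow> ('y \<Rightarrow> 'a::real_vector) \<Rightarrow> 'a" where
  "mean_embedding q \<phi> = (\<Sum>y\<in>UNIV. q y *\<^sub>R \<phi> y)"

lemma ptw_loss_affine:
  fixes \<psi> :: "'o \<Rightarrow> real^'p" and \<phi> :: "'y::finite \<Rightarrow> real^'n"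
  assumes L: "\<And>yh y. L yh y = \<psi> yh \<bullet> (V *v \<phi> y + b) + c y" and q: "q \<in> prob_simplex"
  shows "ptw_loss L yh q = (transpose V *v \<psi> yh) \<bullet> mean_embedding q \<phi> + \<psi> yh \<bullet> b + (\<Sum>y\<in>UNIV. q y * c y)"
proof -
  have "(transpose V *v \<psi> yh) \<bullet> x = \<psi> yh \<bullet> (V *v x)" for x
    by (simp add: dot_lmul_matrix)
  then have "ptw_loss L yh q = (\<Sum>y\<in>UNIV. q y * ((transpose V *v \<psi> yh) \<bullet> \<phi> y))
      + sum q UNIV * (\<psi> yh \<bullet> b) + (\<Sum>y\<in>UNIV. q y * c y)"
    unfolding ptw_loss_def L
    by (simp add: inner_add_right algebra_simps sum.distrib sum_distrib_right)
  then show ?thesis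
    using q by (simp add: prob_simplex_def mean_embedding_def inner_sum_right)
qed

lemma excess_loss_le_dual_norm:
  fixes N :: "real^'p \<Rightarrow> real" and \<psi> :: "'o::finite \<Rightarrow> real^'p" and \<phi> :: "'y::finite \<Rightarrow> real^'p"
  assumes L: "\<And>yh y. L yh y = \<psi> yh \<bullet> (V *v \<phi> y + b) + c y"
    and nrm: "is_norm N"
    and \<sigma>: "\<sigma> = Max (range (\<lambda>yh. dual_norm N (transpose V *v \<psi> yh)))"
    and yh_min: "\<And>y'. \<psi> yh \<bullet> (V *v u + b) \<le> \<psi> y' \<bullet> (V *v u + b)"
    and q: "q \<in> prob_simplex"
  shows "excess_loss L yh q \<le> 2 * \<sigma> * N (u - mean_embedding q \<phi>)"
proof -
  define w where "w y' = transpose V *v \<psi> y'" for y'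
  define \<mu> where "\<mu> = mean_embedding q \<phi>"
  have w_le: "w y' \<bullet> x \<le> \<sigma> * N x" for y' x
  proof -
    have "dual_norm N (w y') \<le> \<sigma>"
      unfolding \<sigma> w_def by (rule Max_ge) auto
    then show ?thesis
      using dual_norm_inner_le[OF nrm, of "w y'" x] mult_right_mono[OF _ is_norm_nonneg[OF nrm]]
      by (meson order_trans)
  qed
  have "Min (range (\<lambda>y'. ptw_loss L y' q)) \<in> range (\<lambda>y'. ptw_loss L y' q)"
    by simp
  then obtain ys where ys: "Min (range (\<lambda>y'. ptw_loss L y' q)) = ptw_loss L ys q"
    by (rule rangeE)
  have "excess_loss L yh q = ptw_loss L yh q - ptw_loss L ys q"
    unfolding excess_loss_def ys ..
  then have "excess_loss L yh q = w yh \<bullet> \<mu> + \<psi> yh \<bullet> b - (w ys \<bullet> \<mu> + \<psi> ys \<bullet> b)"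
    by (simp add: ptw_loss_affine[OF L q] w_def \<mu>_def)
  moreover have "w yh \<bullet> u + \<psi> yh \<bullet> b \<le> w ys \<bullet> u + \<psi> ys \<bullet> b"
    using yh_min[of ys] by (simp add: w_def dot_lmul_matrix inner_add_right)
  ultimately have "excess_loss L yh q \<le> w yh \<bullet> (\<mu> - u) + w ys \<bullet> (u - \<mu>)"
    by (simp add: inner_diff_right)
  also have "\<dots> \<le> \<sigma> * N (u - \<mu>) + \<sigma> * N (u - \<mu>)"
    using w_le[of yh "\<mu> - u"] w_le[of ys "u - \<mu>"]
    unfolding is_norm_minus_commute[OF nrm, of \<mu> u] by linarith
  finally show ?thesis
    by (simp add: \<mu>_def)
qed

locale strongly_convex_regularizer =
  fixes \<Psi> :: "real^'p \<Rightarrow> ereal" and C :: "(real^'p) set"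
    and N :: "real^'p \<Rightarrow> real" and \<beta> :: real
  assumes closed_Psi: "closed_efun \<Psi>"
    and Psi_finite: "\<And>u. u \<in> C \<Longrightarrow> \<bar>\<Psi> u\<bar> \<noteq> \<infinity>"
    and norm_N: "is_norm N"
    and beta_pos: "0 < \<beta>"
    and strongly_convex: "strongly_convex_over \<Psi> C N \<beta>"
    and closed_C: "closed C" and convex_C: "convex C" and C_nonempty: "C \<noteq> {}"
begin

definition Psi_real :: "real^'p \<Rightarrow> real" where
  "Psi_real u = real_of_ereal (\<Psi> u)"

definition conj_objective :: "real^'p \<Rightarrow> real^'p \<Rightarrow> real" where
  "conj_objective \<theta> v = \<theta> \<bullet> v - Psi_real v"

lemma Psi_eq_Psi_real: "u \<in> C \<Longrightarrow> \<Psi> u = ereal (Psi_real u)"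
  using Psi_finite[of u] unfolding Psi_real_def by (cases "\<Psi> u") auto

lemma convex_comb_mem_C:
  "u \<in> C \<Longrightarrow> v \<in> C \<Longrightarrow> 0 \<le> t \<Longrightarrow> t \<le> 1 \<Longrightarrow> t *\<^sub>R u + (1 - t) *\<^sub>R v \<in> C"
  using convexD[OF convex_C] by simp

lemma conj_objective_strongly_concave:
  assumes "u \<in> C" "v \<in> C" "0 \<le> t" "t \<le> 1"
  shows "t * conj_objective \<theta> u + (1 - t) * conj_objective \<theta> v + t * (1 - t) / (2 * \<beta>) * (N (u - v))\<^sup>2
    \<le> conj_objective \<theta> (t *\<^sub>R u + (1 - t) *\<^sub>R v)"
proof -
  have "\<Psi> (t *\<^sub>R u + (1 - t) *\<^sub>R v) \<le> ereal t * \<Psi> u + ereal (1 - t) * \<Psi> v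
      - ereal (t * (1 - t) / (2 * \<beta>) * (N (u - v))\<^sup>2)"
    using strongly_convex assms unfolding strongly_convex_over_def by blast
  then have "Psi_real (t *\<^sub>R u + (1 - t) *\<^sub>R v) \<le> t * Psi_real u + (1 - t) * Psi_real v
      - t * (1 - t) / (2 * \<beta>) * (N (u - v))\<^sup>2"
    using assms convex_comb_mem_C[OF assms] by (simp add: Psi_eq_Psi_real)
  then show ?thesis
    unfolding conj_objective_def by (simp add: inner_add_right algebra_simps)
qed

lemma closed_superlevel_conj_objective: "closed {v \<in> C. s \<le> conj_objective \<theta> v}"
proof -
  have "closed ((\<lambda>v. (v, \<theta> \<bullet> v - s)) -` {(x, t). \<Psi> x \<le> ereal t})"
    using closed_Psi unfolding closed_efun_def
    by (intro continuous_closed_vimage) (auto intro!: continuous_intros)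
  moreover have "{v \<in> C. s \<le> conj_objective \<theta> v} = C \<inter> (\<lambda>v. (v, \<theta> \<bullet> v - s)) -` {(x, t). \<Psi> x \<le> ereal t}"
    using Psi_eq_Psi_real unfolding conj_objective_def by auto
  ultimately show ?thesis
    using closed_C by auto
qed

lemma conj_objective_attains_sup_compact:
  assumes "compact K" "K \<subseteq> C" "K \<noteq> {}"
  shows "\<exists>x\<in>K. \<forall>y\<in>K. conj_objective \<theta> y \<le> conj_objective \<theta> x"
proof (rule compact_attains_sup_closed_superlevels[OF assms(1,3)])
  fix s
  have "{v \<in> K. s \<le> conj_objective \<theta> v} = K \<inter> {v \<in> C. s \<le> conj_objective \<theta> v}"
    using assms(2) by auto
  then show "closed {v \<in> K. s \<le> conj_objective \<theta> v}"
    using closed_superlevel_conj_objective compact_imp_closed[OF assms(1)] by auto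
qed

text \<open>Let \<open>B\<close> be the maximum of the objective on the compact set \<open>C \<inter> cball u0 1\<close>. For \<open>v\<close> at
  distance \<open>r > 1\<close> from \<open>u0\<close>, strong concavity on the segment \<open>[u0, v]\<close> evaluated where it leaves
  the unit ball gives \<open>(r - 1) c\<^sup>2 / (2 \<beta>) \<le> B - g u0\<close>.\<close>
lemma conj_objective_superlevel_bounded:
  assumes "u0 \<in> C"
  obtains R where "\<And>v. v \<in> C \<Longrightarrow> conj_objective \<theta> u0 \<le> conj_objective \<theta> v \<Longrightarrow> dist u0 v \<le> R"
proof -
  let ?g = "conj_objective \<theta>"
  obtain c where c: "0 < c" "\<And>x. c * norm x \<le> N x"
    using is_norm_lower_bound[OF norm_N] by blast
  have "compact (C \<inter> cball u0 1)" "C \<inter> cball u0 1 \<noteq> {}"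
    using closed_C assms by (auto simp: closed_Int_compact)
  then obtain x1 where x1: "\<forall>y\<in>C \<inter> cball u0 1. ?g y \<le> ?g x1"
    using conj_objective_attains_sup_compact[OF _ Int_lower1] by blast
  have "norm (v - u0) \<le> 1 + 2 * \<beta> * (?g x1 - ?g u0) / c\<^sup>2"
    if v: "v \<in> C" "?g u0 \<le> ?g v" and far: "1 < norm (v - u0)" for v
  proof -
    define r where "r = norm (v - u0)"
    have t: "0 \<le> 1 / r" "1 / r \<le> 1"
      using far by (simp_all add: r_def divide_le_eq)
    define w where "w = (1 / r) *\<^sub>R v + (1 - 1 / r) *\<^sub>R u0"
    have "w - u0 = (1 / r) *\<^sub>R (v - u0)"
      by (simp add: w_def algebra_simps)
    then have "norm (w - u0) = 1"
      using far by (auto simp: r_def)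
    moreover have "w \<in> C"
      unfolding w_def by (rule convex_comb_mem_C[OF v(1) assms t])
    ultimately have "w \<in> C \<inter> cball u0 1"
      by (simp add: dist_norm norm_minus_commute)
    then have "?g w \<le> ?g x1"
      using x1 by blast
    moreover have "1 / r * ?g v + (1 - 1 / r) * ?g u0 + 1 / r * (1 - 1 / r) / (2 * \<beta>) * (N (v - u0))\<^sup>2 \<le> ?g w"
      unfolding w_def by (rule conj_objective_strongly_concave[OF v(1) assms t])
    moreover have "?g u0 \<le> 1 / r * ?g v + (1 - 1 / r) * ?g u0"
      using mult_left_mono[OF v(2) t(1)] by (simp add: algebra_simps)
    moreover have "(r - 1) * c\<^sup>2 / (2 * \<beta>) \<le> 1 / r * (1 - 1 / r) / (2 * \<beta>) * (N (v - u0))\<^sup>2"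
    proof -
      have "(c * r)\<^sup>2 \<le> (N (v - u0))\<^sup>2"
        using c far by (intro power_mono) (auto simp: r_def)
      then have "1 / r * (1 - 1 / r) / (2 * \<beta>) * (c * r)\<^sup>2 \<le> 1 / r * (1 - 1 / r) / (2 * \<beta>) * (N (v - u0))\<^sup>2"
        using t beta_pos by (intro mult_left_mono) auto
      moreover have "1 / r * (1 - 1 / r) / (2 * \<beta>) * (c * r)\<^sup>2 = (r - 1) * c\<^sup>2 / (2 * \<beta>)"
        using far beta_pos by (simp add: r_def[symmetric] field_simps power2_eq_square)
      ultimately show ?thesis
        by simp
    qed
    ultimately have "(r - 1) * c\<^sup>2 / (2 * \<beta>) \<le> ?g x1 - ?g u0"
      by linarith
    then show ?thesis
      using c(1) beta_pos by (simp add: r_def field_simps)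
  qed
  then have "dist u0 v \<le> max 1 (1 + 2 * \<beta> * (?g x1 - ?g u0) / c\<^sup>2)"
    if "v \<in> C" "?g u0 \<le> ?g v" for v
    using that by (force simp: dist_norm norm_minus_commute)
  then show ?thesis
    using that by blast
qed

lemma conj_objective_attains_sup: "\<exists>u\<in>C. \<forall>v\<in>C. conj_objective \<theta> v \<le> conj_objective \<theta> u"
proof -
  let ?g = "conj_objective \<theta>"
  obtain u0 where u0: "u0 \<in> C"
    using C_nonempty by blast
  obtain R where R: "\<And>v. v \<in> C \<Longrightarrow> ?g u0 \<le> ?g v \<Longrightarrow> dist u0 v \<le> R"
    using conj_objective_superlevel_bounded[OF u0] by blast
  have "u0 \<in> C \<inter> cball u0 R"
    using R[OF u0] u0 by simp
  moreover have "compact (C \<inter> cball u0 R)"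
    using closed_C by (simp add: closed_Int_compact)
  ultimately obtain x where x: "x \<in> C \<inter> cball u0 R" "\<And>y. y \<in> C \<inter> cball u0 R \<Longrightarrow> ?g y \<le> ?g x"
    using conj_objective_attains_sup_compact[OF _ Int_lower1] by blast
  have "?g v \<le> ?g x" if "v \<in> C" for v
  proof (cases "?g u0 \<le> ?g v")
    case True
    then show ?thesis
      using x(2) R[OF that] that by simp
  next
    case False
    then show ?thesis
      using x(2)[OF \<open>u0 \<in> C \<inter> cball u0 R\<close>] by linarith
  qed
  then show ?thesis
    using x(1) by blast
qed

lemma conj_objective_quadratic_growth:
  assumes u: "u \<in> C" and max: "\<And>v. v \<in> C \<Longrightarrow> conj_objective \<theta> v \<le> conj_objective \<theta> u"
    and v: "v \<in> C"
  shows "conj_objective \<theta> v \<le> conj_objective \<theta> u - (N (v - u))\<^sup>2 / (2 * \<beta>)"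
proof -
  define K where "K = (N (v - u))\<^sup>2 / (2 * \<beta>)"
  define A where "A = conj_objective \<theta> u - conj_objective \<theta> v"
  have "z * K \<le> A" if z: "0 < z" "z < 1" for z
  proof -
    have "(1 - z) * conj_objective \<theta> v + z * conj_objective \<theta> u + (1 - z) * z * K
        \<le> conj_objective \<theta> ((1 - z) *\<^sub>R v + (1 - (1 - z)) *\<^sub>R u)"
      using conj_objective_strongly_concave[OF v u, of "1 - z"] z by (simp add: K_def)
    also have "\<dots> \<le> conj_objective \<theta> u"
      using max convex_comb_mem_C[OF v u, of "1 - z"] z by simp
    finally have "(1 - z) * (z * K - A) \<le> 0"
      by (simp add: A_def algebra_simps)
    then show ?thesis
      using z by (simp add: mult_le_0_iff)
  qed
  then have "K \<le> A"
    by (rule field_le_mult_one_interval)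
  then show ?thesis
    by (simp add: K_def A_def)
qed

definition prj :: "real^'p \<Rightarrow> real^'p" where
  "prj \<theta> = (SOME u. u \<in> C \<and> (\<forall>v\<in>C. conj_objective \<theta> v \<le> conj_objective \<theta> u))"

definition conj_val :: "real^'p \<Rightarrow> real" where
  "conj_val \<theta> = conj_objective \<theta> (prj \<theta>)"

lemma prj_maximizes: "prj \<theta> \<in> C \<and> (\<forall>v\<in>C. conj_objective \<theta> v \<le> conj_val \<theta>)"
  unfolding conj_val_def prj_def by (rule someI_ex) (use conj_objective_attains_sup in blast)

lemma prj_mem_C: "prj \<theta> \<in> C"
  using prj_maximizes by blast

lemma conj_objective_le_conj_val: "v \<in> C \<Longrightarrow> conj_objective \<theta> v \<le> conj_val \<theta>"
  using prj_maximizes by blast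

lemma conj_val_quadratic_growth:
  "v \<in> C \<Longrightarrow> conj_objective \<theta> v \<le> conj_val \<theta> - (N (v - prj \<theta>))\<^sup>2 / (2 * \<beta>)"
  using conj_objective_quadratic_growth[OF prj_mem_C] conj_objective_le_conj_val
  by (simp add: conj_val_def)

lemma fenchel_conj_Omega: "fenchel_conj (Omega \<Psi> C) \<theta> = ereal (conj_val \<theta>)"
  unfolding fenchel_conj_def
proof (rule antisym)
  show "(SUP u. ereal (\<theta> \<bullet> u) - Omega \<Psi> C u) \<le> ereal (conj_val \<theta>)"
  proof (rule SUP_least)
    fix u
    show "ereal (\<theta> \<bullet> u) - Omega \<Psi> C u \<le> ereal (conj_val \<theta>)"
      using conj_objective_le_conj_val[of u \<theta>]
      by (cases "u \<in> C") (simp_all add: Omega_def Psi_eq_Psi_real conj_objective_def)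
  qed
  show "ereal (conj_val \<theta>) \<le> (SUP u. ereal (\<theta> \<bullet> u) - Omega \<Psi> C u)"
    using prj_mem_C[of \<theta>]
    by (intro SUP_upper2[of "prj \<theta>"]) (simp_all add: Omega_def Psi_eq_Psi_real conj_val_def conj_objective_def)
qed

lemma conj_val_subgradient: "conj_val \<theta> + k \<bullet> prj \<theta> \<le> conj_val (\<theta> + k)"
  using conj_objective_le_conj_val[OF prj_mem_C, of "\<theta> + k" \<theta>]
  by (simp add: conj_val_def conj_objective_def inner_add_left)

text \<open>The hypothesis says that the dual norm of \<open>k\<close> is at most \<open>a\<close>.\<close>
lemma conj_val_smooth:
  assumes k: "\<And>x. k \<bullet> x \<le> a * N x"
  shows "conj_val (\<theta> + k) - conj_val \<theta> - k \<bullet> prj \<theta> \<le> \<beta> * a\<^sup>2 / 2"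
proof -
  define D where "D = prj (\<theta> + k) - prj \<theta>"
  have "conj_val (\<theta> + k) = k \<bullet> prj (\<theta> + k) + conj_objective \<theta> (prj (\<theta> + k))"
    by (simp add: conj_val_def conj_objective_def inner_add_left)
  then have "conj_val (\<theta> + k) - conj_val \<theta> - k \<bullet> prj \<theta> \<le> k \<bullet> D - (N D)\<^sup>2 / (2 * \<beta>)"
    using conj_val_quadratic_growth[OF prj_mem_C, of \<theta> "\<theta> + k"] by (simp add: D_def inner_diff_right)
  also have "\<dots> \<le> a * N D - (N D)\<^sup>2 / (2 * \<beta>)"
    using k[of D] by simp
  also have "\<dots> \<le> \<beta> * a\<^sup>2 / 2"
  proof -
    have "\<beta> * a\<^sup>2 / 2 - (a * N D - (N D)\<^sup>2 / (2 * \<beta>)) = (\<beta> * a - N D)\<^sup>2 / (2 * \<beta>)"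
      using beta_pos by (simp add: field_simps power2_eq_square)
    then show ?thesis
      using beta_pos by (smt (verit) divide_nonneg_pos zero_le_power2)
  qed
  finally show ?thesis .
qed

lemma conj_val_has_derivative: "(conj_val has_derivative (\<lambda>h. prj \<theta> \<bullet> h)) (at \<theta>)"
proof -
  obtain c where c: "0 < c" "\<And>x. c * norm x \<le> N x"
    using is_norm_lower_bound[OF norm_N] by blast
  have dual_bound: "k \<bullet> x \<le> (norm k / c) * N x" for k x
  proof -
    have "norm k * norm x \<le> norm k * (N x / c)"
      using c by (intro mult_left_mono) (simp_all add: pos_le_divide_eq mult.commute)
    then show ?thesis
      using norm_cauchy_schwarz[of k x] by simp
  qed
  have "conj_val (\<theta> + k) - conj_val \<theta> - prj \<theta> \<bullet> k \<le> \<beta> / (2 * c\<^sup>2) * (norm k)\<^sup>2" for k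
  proof -
    have "conj_val (\<theta> + k) - conj_val \<theta> - k \<bullet> prj \<theta> \<le> \<beta> * (norm k / c)\<^sup>2 / 2"
      by (rule conj_val_smooth) (rule dual_bound)
    then show ?thesis
      by (simp add: inner_commute power_divide)
  qed
  moreover have "0 \<le> conj_val (\<theta> + k) - conj_val \<theta> - prj \<theta> \<bullet> k" for k
    using conj_val_subgradient[of \<theta> k] by (simp add: inner_commute)
  ultimately show ?thesis
    by (rule has_derivative_of_quadratic_sandwich[rotated])
qed

lemma proj_PsiC_eq_prj: "proj_PsiC \<Psi> C \<theta> = prj \<theta>"
proof -
  have conj: "(\<lambda>z. real_of_ereal (fenchel_conj (Omega \<Psi> C) z)) = conj_val"
    by (simp add: fenchel_conj_Omega)
  then have "(conj_val has_derivative (\<lambda>h. proj_PsiC \<Psi> C \<theta> \<bullet> h)) (at \<theta>)"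
    unfolding proj_PsiC_def egrad_def using conj_val_has_derivative by (metis (mono_tags) someI)
  then have "(\<lambda>h. proj_PsiC \<Psi> C \<theta> \<bullet> h) = (\<lambda>h. prj \<theta> \<bullet> h)"
    using conj_val_has_derivative by (rule has_derivative_unique)
  then show ?thesis
    by (metis vector_eq_rdot)
qed


lemma ptw_surr_surrogate:
  assumes q: "q \<in> prob_simplex" and \<phi>: "range \<phi> \<subseteq> C"
  shows "ptw_surr (surrogate \<Psi> C \<phi>) \<theta> q
    = ereal (conj_val \<theta> - \<theta> \<bullet> mean_embedding q \<phi> + (\<Sum>y\<in>UNIV. q y * Psi_real (\<phi> y)))"
proof -
  have "surrogate \<Psi> C \<phi> \<theta> y = ereal (conj_val \<theta> + Psi_real (\<phi> y) - \<theta> \<bullet> \<phi> y)" for y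
    using \<phi> by (auto simp: surrogate_def fenchel_conj_Omega Omega_def Psi_eq_Psi_real)
  then have "ptw_surr (surrogate \<Psi> C \<phi>) \<theta> q = ereal (\<Sum>y\<in>UNIV. q y * (conj_val \<theta> + Psi_real (\<phi> y) - \<theta> \<bullet> \<phi> y))"
    by (simp add: ptw_surr_def)
  also have "(\<Sum>y\<in>UNIV. q y * (conj_val \<theta> + Psi_real (\<phi> y) - \<theta> \<bullet> \<phi> y))
      = sum q UNIV * conj_val \<theta> - \<theta> \<bullet> mean_embedding q \<phi> + (\<Sum>y\<in>UNIV. q y * Psi_real (\<phi> y))"
    by (simp add: mean_embedding_def inner_sum_right algebra_simps sum.distrib sum_subtractf sum_distrib_right)
  finally show ?thesis
    using q by (simp add: prob_simplex_def)
qed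

text \<open>The witness is \<open>\<theta> - t h\<close> with \<open>h\<close> an almost norming functional of \<open>prj \<theta> - \<mu>\<close> and
  \<open>t = N (prj \<theta> - \<mu>) / \<beta>\<close>, the step length minimising the bound of \<open>conj_val_smooth\<close>.\<close>
lemma conj_val_descent:
  assumes z: "0 < z" "z < 1"
  obtains \<theta>' where "conj_val \<theta>' - \<theta>' \<bullet> \<mu> \<le> conj_val \<theta> - \<theta> \<bullet> \<mu> - z * (N (prj \<theta> - \<mu>))\<^sup>2 / (2 * \<beta>)"
proof -
  define d where "d = prj \<theta> - \<mu>"
  obtain h where h: "\<And>x. h \<bullet> x \<le> N x" "(1 + z) / 2 * N d \<le> h \<bullet> d"
    using norming_functional_approx[OF norm_N, of "(1 + z) / 2"] z by auto
  define t where "t = N d / \<beta>"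
  have "0 \<le> t"
    using is_norm_nonneg[OF norm_N] beta_pos by (simp add: t_def)
  have "(- (t *\<^sub>R h)) \<bullet> x \<le> t * N x" for x
    using mult_left_mono[OF h(1)[of "- x"] \<open>0 \<le> t\<close>] by (simp add: is_norm_minus[OF norm_N])
  then have "conj_val (\<theta> + - (t *\<^sub>R h)) - conj_val \<theta> - (- (t *\<^sub>R h)) \<bullet> prj \<theta> \<le> \<beta> * t\<^sup>2 / 2"
    by (rule conj_val_smooth)
  then have "conj_val (\<theta> - t *\<^sub>R h) - (\<theta> - t *\<^sub>R h) \<bullet> \<mu>
      \<le> conj_val \<theta> - \<theta> \<bullet> \<mu> - t * (h \<bullet> d) + \<beta> * t\<^sup>2 / 2"
    by (simp add: d_def inner_diff_left inner_diff_right right_diff_distrib)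
  also have "\<dots> \<le> conj_val \<theta> - \<theta> \<bullet> \<mu> - t * ((1 + z) / 2 * N d) + \<beta> * t\<^sup>2 / 2"
    using mult_left_mono[OF h(2) \<open>0 \<le> t\<close>] by simp
  also have "\<dots> = conj_val \<theta> - \<theta> \<bullet> \<mu> - z * (N d)\<^sup>2 / (2 * \<beta>)"
    using beta_pos by (simp add: t_def field_simps power2_eq_square)
  finally show ?thesis
    using that by (simp add: d_def)
qed

lemma excess_surr_surrogate_ge:
  assumes "q \<in> prob_simplex" "range \<phi> \<subseteq> C"
  shows "ereal ((N (prj \<theta> - mean_embedding q \<phi>))\<^sup>2 / (2 * \<beta>)) \<le> excess_surr (surrogate \<Psi> C \<phi>) \<theta> q"
proof -
  define \<mu> where "\<mu> = mean_embedding q \<phi>"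
  define M where "M = (N (prj \<theta> - \<mu>))\<^sup>2 / (2 * \<beta>)"
  define P where "P \<theta>' = conj_val \<theta>' - \<theta>' \<bullet> \<mu> + (\<Sum>y\<in>UNIV. q y * Psi_real (\<phi> y))" for \<theta>'
  define I where "I = (INF \<theta>'. ereal (P \<theta>'))"
  have I_le: "I \<le> ereal (P \<theta> - z * M)" if z: "0 < z" "z < 1" for z
  proof -
    obtain \<theta>' where "conj_val \<theta>' - \<theta>' \<bullet> \<mu> \<le> conj_val \<theta> - \<theta> \<bullet> \<mu> - z * (N (prj \<theta> - \<mu>))\<^sup>2 / (2 * \<beta>)"
      using conj_val_descent[OF z] by blast
    then have "P \<theta>' \<le> P \<theta> - z * M"
      by (simp add: P_def M_def)
    then show ?thesis
      unfolding I_def by (intro INF_lower2[OF UNIV_I]) simp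
  qed
  have "ereal M \<le> ereal (P \<theta>) - I"
  proof (cases I)
    case (real i)
    have "M \<le> P \<theta> - i"
    proof (rule field_le_mult_one_interval)
      fix z :: real assume "0 < z" "z < 1"
      then have "i \<le> P \<theta> - z * M"
        using I_le real by simp
      then show "z * M \<le> P \<theta> - i"
        by linarith
    qed
    then show ?thesis
      using real by simp
  next
    case PInf
    then show ?thesis
      using I_le[of "1 / 2"] by simp
  qed simp
  moreover have "excess_surr (surrogate \<Psi> C \<phi>) \<theta> q = ereal (P \<theta>) - I"
    using assms by (simp add: excess_surr_def ptw_surr_surrogate P_def I_def \<mu>_def)
  ultimately show ?thesis
    by (simp add: M_def \<mu>_def)
qed

end

theorem mainTheorem8:
  fixes \<phi> :: "'y::finite \<Rightarrow> real^'p"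
    and \<psi> :: "'o::finite \<Rightarrow> real^'p"
    and V :: "real^'p^'p" and b :: "real^'p" and c :: "'y \<Rightarrow> real"
    and L :: "'o \<Rightarrow> 'y \<Rightarrow> real"
    and \<Psi> :: "real^'p \<Rightarrow> ereal" and C :: "(real^'p) set"
    and N :: "real^'p \<Rightarrow> real" and \<beta> \<sigma> :: real
    and yhat :: "real^'p \<Rightarrow> 'o"
  assumes L_def: "\<And>yh y. L yh y = \<psi> yh \<bullet> (V *v \<phi> y + b) + c y"
    and legendre: "legendre_type \<Psi>"
    and norm: "is_norm N"
    and beta_pos: "\<beta> > 0"
    and strong: "strongly_convex_over \<Psi> C N \<beta>"
    and C_closed: "closed C" and C_convex: "convex C"
    and phi_C: "range \<phi> \<subseteq> C" and C_dom: "C \<subseteq> edom \<Psi>"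
    and sigma_def: "\<sigma> = Max (range (\<lambda>yh. dual_norm N (transpose V *v \<psi> yh)))"
    and sigma_pos: "\<sigma> > 0"
    and yhat_min: "\<And>u y'. \<psi> (yhat u) \<bullet> (V *v u + b) \<le> \<psi> y' \<bullet> (V *v u + b)"
  shows "\<forall>\<epsilon>\<ge>0. calibration_fun L (surrogate \<Psi> C \<phi>) (yhat \<circ> proj_PsiC \<Psi> C) \<epsilon>
           \<ge> ereal (\<epsilon>\<^sup>2 / (8 * \<beta> * \<sigma>\<^sup>2))"
proof (intro allI impI)
  fix \<epsilon> :: real assume "\<epsilon> \<ge> 0"
  have "\<bar>\<Psi> u\<bar> \<noteq> \<infinity>" if "u \<in> C" for u
    using legendre C_dom that by (auto simp: legendre_type_def proper_fun_def edom_def)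
  then interpret strongly_convex_regularizer \<Psi> C N \<beta>
    using legendre norm beta_pos strong C_closed C_convex phi_C
    by unfold_locales (auto simp: legendre_type_def)
  show "ereal (\<epsilon>\<^sup>2 / (8 * \<beta> * \<sigma>\<^sup>2)) \<le> calibration_fun L (surrogate \<Psi> C \<phi>) (yhat \<circ> proj_PsiC \<Psi> C) \<epsilon>"
    unfolding calibration_fun_def
  proof (rule INF_greatest, clarify)
    fix \<theta> and q :: "'y \<Rightarrow> real"
    assume q: "q \<in> prob_simplex" and \<epsilon>_le: "\<epsilon> \<le> excess_loss L ((yhat \<circ> proj_PsiC \<Psi> C) \<theta>) q"
    define d where "d = N (prj \<theta> - mean_embedding q \<phi>)"
    have "\<epsilon> \<le> excess_loss L (yhat (prj \<theta>)) q"
      using \<epsilon>_le by (simp add: proj_PsiC_eq_prj)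
    also have "\<dots> \<le> 2 * \<sigma> * d"
      unfolding d_def by (rule excess_loss_le_dual_norm[OF L_def norm sigma_def yhat_min q])
    finally have "\<epsilon> \<le> 2 * \<sigma> * d" .
    then have "\<epsilon>\<^sup>2 \<le> 4 * \<sigma>\<^sup>2 * d\<^sup>2"
      using \<open>\<epsilon> \<ge> 0\<close> power_mono[of \<epsilon> "2 * \<sigma> * d" 2] by (simp add: power_mult_distrib)
    then have "\<epsilon>\<^sup>2 / (8 * \<beta> * \<sigma>\<^sup>2) \<le> d\<^sup>2 / (2 * \<beta>)"
      using beta_pos sigma_pos by (simp add: field_simps)
    also have "ereal (d\<^sup>2 / (2 * \<beta>)) \<le> excess_surr (surrogate \<Psi> C \<phi>) \<theta> q"
      unfolding d_def by (rule excess_surr_surrogate_ge[OF q phi_C])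
    finally show "ereal (\<epsilon>\<^sup>2 / (8 * \<beta> * \<sigma>\<^sup>2)) \<le> excess_surr (surrogate \<Psi> C \<phi>) \<theta> q"
      by simp
  qed
qed

end
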